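(* Let $T_0=0$ and let $T_1,T_2,\dots$ be random variables such that $T_{i+1}-T_i$, $i\ge0$, are i.i.d. exponential with parameter $1$. Let $\beta>0$, $K_0>0$ and let $(Y_k)_{k\in\mathbb{N}^\ast}$ be non-negative random variables with $\mathbb{E}[e^{\beta T_k}Y_k]\le K_0$ for all $k\in\mathbb{N}^\ast$. Then for every $c\in(0,1)$, almost surely $Y_k=o(e^{-\beta ck})$ as $k\to\infty$, i.e. $e^{\beta ck}Y_k\to0$ almost surely. *)

theory Defs
  imports "HOL-Probability.Probability"
begin

end

theory Submission
  imports Defs
begin

text \<open>
  Put s = (1 - c)/2 and a = 1 - s, so c < a < 1. Where T_k \<ge> a k, the quantity e^(\<beta> c k) Y_k is
  at most e^(-\<beta> (a - c) k) e^(\<beta> T_k) Y_k, whose expectation is at most K_0 e^(-\<beta> (a - c) k).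
  As T_k is a sum of k independent standard exponentials, E e^(-s T_k) = (1 + s)^(-k), so the
  exponential Chebyshev inequality bounds P(T_k < a k) by (e^(s a) / (1 + s))^k, which decays
  geometrically because e^(s (1 - s)) < 1 + s. Hence the expectations of min 1 (e^(\<beta> c k) Y_k)
  are summable, so almost surely these terms are summable and tend to 0.
\<close>

lemma exp_mult_one_minus_less:
  fixes s :: real
  assumes "0 < s" "s < 1"
  shows "exp (s * (1 - s)) < 1 + s"
proof -
  have "exp (s * (1 - s)) \<le> 1 + s * (1 - s) + (s * (1 - s))\<^sup>2"
    by (rule exp_bound) (use assms in \<open>auto intro: mult_le_one\<close>)
  also have "\<dots> < 1 + s"
  proof -
    have "(1 - s) * (1 - s) < 1"
      using assms by (smt (verit) mult_less_cancel_right1)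
    then have "(s * s) * ((1 - s) * (1 - s)) < (s * s) * 1"
      using assms by (intro mult_strict_left_mono) auto
    then show ?thesis by (simp add: power2_eq_square algebra_simps)
  qed
  finally show ?thesis .
qed

lemma nn_integral_exp_neg_exponential:
  assumes X: "distributed M lborel X (\<lambda>t. ennreal (exponential_density l t))"
    and "0 < l" "0 < l + s"
  shows "(\<integral>\<^sup>+x. ennreal (exp (- s * X x)) \<partial>M) = ennreal (l / (l + s))"
proof -
  have tilt: "exponential_density l t * exp (- s * t) = l / (l + s) * exponential_density (l + s) t"
    for t :: real
    using assms(3) by (simp add: exponential_density_def mult_exp_exp field_simps)
  have total: "(\<integral>\<^sup>+t. ennreal (exponential_density (l + s) t) \<partial>lborel) = 1"
    using prob_space.emeasure_space_1[OF prob_space_exponential_density[OF assms(3)]]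
    by (simp add: emeasure_density)
  have "(\<integral>\<^sup>+x. ennreal (exp (- s * X x)) \<partial>M)
      = (\<integral>\<^sup>+t. ennreal (exponential_density l t) * ennreal (exp (- s * t)) \<partial>lborel)"
    by (simp add: distributed_nn_integral[OF X])
  also have "\<dots> = (\<integral>\<^sup>+t. ennreal (l / (l + s)) * ennreal (exponential_density (l + s) t) \<partial>lborel)"
  proof (intro nn_integral_cong)
    fix t :: real
    show "ennreal (exponential_density l t) * ennreal (exp (- s * t))
        = ennreal (l / (l + s)) * ennreal (exponential_density (l + s) t)"
      using assms(2,3) tilt[of t] by (simp flip: ennreal_mult')
  qed
  also have "\<dots> = ennreal (l / (l + s))"
    by (simp add: nn_integral_cmult total)
  finally show ?thesis .
qed

lemma (in prob_space) nn_integral_exp_neg_sum_exponential: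
  assumes indep: "indep_vars (\<lambda>_. borel) D I" and "finite I"
    and expo: "\<And>i. i \<in> I \<Longrightarrow> distributed M lborel (D i) (\<lambda>t. ennreal (exponential_density l t))"
    and "0 < l" "0 < l + s"
  shows "(\<integral>\<^sup>+x. ennreal (exp (- s * (\<Sum>i\<in>I. D i x))) \<partial>M) = ennreal ((l / (l + s)) ^ card I)"
proof -
  have "(\<integral>\<^sup>+x. ennreal (exp (- s * (\<Sum>i\<in>I. D i x))) \<partial>M)
      = (\<integral>\<^sup>+x. (\<Prod>i\<in>I. ennreal (exp (- s * D i x))) \<partial>M)"
    using \<open>finite I\<close> by (simp add: sum_distrib_left exp_sum prod_ennreal)
  also have "\<dots> = (\<Prod>i\<in>I. \<integral>\<^sup>+x. ennreal (exp (- s * D i x)) \<partial>M)"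
    using indep by (intro indep_vars_nn_integral \<open>finite I\<close> indep_vars_compose2[OF indep]) auto
  also have "\<dots> = (\<Prod>i\<in>I. ennreal (l / (l + s)))"
    using assms(4,5) by (intro prod.cong refl nn_integral_exp_neg_exponential expo)
  finally show ?thesis
    using assms(4,5) by (simp add: ennreal_power)
qed

lemma (in prob_space) nn_integral_exp_neg_renewal:
  assumes T0: "\<And>x. x \<in> space M \<Longrightarrow> T 0 x = 0"
    and indep: "indep_vars (\<lambda>_. borel) (\<lambda>i x. T (Suc i) x - T i x) UNIV"
    and expo: "\<And>i. distributed M lborel (\<lambda>x. T (Suc i) x - T i x)
                 (\<lambda>t. ennreal (exponential_density l t))"
    and "0 < l" "0 < l + s"
  shows "(\<integral>\<^sup>+x. ennreal (exp (- s * T k x)) \<partial>M) = ennreal ((l / (l + s)) ^ k)"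
proof -
  have "T k x = (\<Sum>i<k. T (Suc i) x - T i x)" if "x \<in> space M" for x
    using T0 that by (induction k) auto
  then show ?thesis
    using nn_integral_exp_neg_sum_exponential[OF indep_vars_subset[OF indep] _ expo, of "{..<k}"] assms(4,5)
    by (simp cong: nn_integral_cong)
qed

lemma min_one_le_split:
  fixes Y t n \<beta> a c s :: real
  assumes "0 \<le> Y" "0 \<le> \<beta>" "c \<le> a" "0 \<le> s"
  shows "min 1 (exp (\<beta> * c * n) * Y)
    \<le> exp (- \<beta> * (a - c) * n) * (exp (\<beta> * t) * Y) + exp (s * a * n) * exp (- s * t)"
proof (cases "a * n \<le> t")
  case True
  have "exp (\<beta> * c * n) * Y = exp (\<beta> * (c * n - t)) * (exp (\<beta> * t) * Y)"
    by (simp add: mult_exp_exp algebra_simps)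
  also have "\<dots> \<le> exp (- \<beta> * (a - c) * n) * (exp (\<beta> * t) * Y)"
    using True assms by (intro mult_right_mono) (auto simp: algebra_simps mult_left_mono)
  finally have "min 1 (exp (\<beta> * c * n) * Y) \<le> exp (- \<beta> * (a - c) * n) * (exp (\<beta> * t) * Y)"
    by (simp add: min.coboundedI2)
  moreover have "0 \<le> exp (s * a * n) * exp (- s * t)"
    by simp
  ultimately show ?thesis
    by linarith
next
  case False
  then have "s * t \<le> s * (a * n)"
    using assms(4) by (intro mult_left_mono) auto
  then have "1 \<le> exp (s * a * n) * exp (- s * t)"
    by (simp add: mult_exp_exp algebra_simps)
  then show ?thesis
    using assms by (smt (verit) exp_gt_zero mult_nonneg_nonneg)
qed

lemma nn_integral_min_one_le_split:
  assumes [measurable]: "T \<in> borel_measurable M" "Y \<in> borel_measurable M"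
    and Y: "\<And>x. x \<in> space M \<Longrightarrow> 0 \<le> Y x"
    and "0 \<le> \<beta>" "c \<le> a" "0 \<le> s" "0 \<le> K" "0 \<le> L"
    and K: "(\<integral>\<^sup>+x. ennreal (exp (\<beta> * T x) * Y x) \<partial>M) \<le> ennreal K"
    and L: "(\<integral>\<^sup>+x. ennreal (exp (- s * T x)) \<partial>M) \<le> ennreal L"
  shows "(\<integral>\<^sup>+x. ennreal (min 1 (exp (\<beta> * c * n) * Y x)) \<partial>M)
    \<le> ennreal (exp (- \<beta> * (a - c) * n) * K + exp (s * a * n) * L)"
proof -
  let ?q = "exp (- \<beta> * (a - c) * n)" and ?e = "exp (s * a * n)"
  have "(\<integral>\<^sup>+x. ennreal (min 1 (exp (\<beta> * c * n) * Y x)) \<partial>M)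
      \<le> (\<integral>\<^sup>+x. ennreal (?q * (exp (\<beta> * T x) * Y x) + ?e * exp (- s * T x)) \<partial>M)"
    using assms(4-6) Y by (intro nn_integral_mono ennreal_leI min_one_le_split) auto
  also have "\<dots> = (\<integral>\<^sup>+x. ennreal ?q * ennreal (exp (\<beta> * T x) * Y x) + ennreal ?e * ennreal (exp (- s * T x)) \<partial>M)"
    using Y by (intro nn_integral_cong) (simp add: ennreal_mult')
  also have "\<dots> = ennreal ?q * (\<integral>\<^sup>+x. ennreal (exp (\<beta> * T x) * Y x) \<partial>M)
      + ennreal ?e * (\<integral>\<^sup>+x. ennreal (exp (- s * T x)) \<partial>M)"
    by (simp add: nn_integral_add nn_integral_cmult)
  also have "\<dots> \<le> ennreal ?q * ennreal K + ennreal ?e * ennreal L"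
    using K L by (intro add_mono mult_left_mono) auto
  also have "\<dots> = ennreal (?q * K + ?e * L)"
    using assms(7,8) by (simp add: ennreal_mult')
  finally show ?thesis .
qed

lemma AE_tendsto_zero_if_summable_nn_integral:
  fixes f :: "nat \<Rightarrow> 'a \<Rightarrow> real"
  assumes [measurable]: "\<And>k. f k \<in> borel_measurable M"
    and f: "\<And>k x. x \<in> space M \<Longrightarrow> 0 \<le> f k x"
    and bound: "\<And>k. (\<integral>\<^sup>+x. ennreal (f k x) \<partial>M) \<le> ennreal (b k)"
    and b: "summable b" "\<And>k. 0 \<le> b k"
  shows "AE x in M. (\<lambda>k. f k x) \<longlonglongrightarrow> 0"
proof -
  have "(\<integral>\<^sup>+x. (\<Sum>k. ennreal (f k x)) \<partial>M) = (\<Sum>k. \<integral>\<^sup>+x. ennreal (f k x) \<partial>M)"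
    by (simp add: nn_integral_suminf)
  also have "\<dots> \<le> (\<Sum>k. ennreal (b k))"
    using bound by (intro suminf_le) auto
  also have "\<dots> < \<infinity>"
    using ennreal_suminf_neq_top[OF b] by (simp add: top.not_eq_extremum)
  finally have "AE x in M. (\<Sum>k. ennreal (f k x)) \<noteq> \<infinity>"
    by (intro nn_integral_PInf_AE) auto
  then show ?thesis
  proof (rule AE_mp[OF _ AE_I2[OF impI]])
    fix x assume "x \<in> space M" and "(\<Sum>k. ennreal (f k x)) \<noteq> \<infinity>"
    then have "summable (\<lambda>k. f k x)"
      using f by (intro summable_suminf_not_top) auto
    then show "(\<lambda>k. f k x) \<longlonglongrightarrow> 0"
      by (rule summable_LIMSEQ_zero)
  qed
qed

lemma tendsto_zero_if_min_one_tendsto_zero: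
  fixes f :: "'a \<Rightarrow> real"
  assumes lim: "((\<lambda>x. min 1 (f x)) \<longlongrightarrow> 0) F"
  shows "(f \<longlongrightarrow> 0) F"
proof -
  have "eventually (\<lambda>x. min 1 (f x) < 1) F"
    using order_tendstoD(2)[OF lim] by simp
  then have "eventually (\<lambda>x. min 1 (f x) = f x) F"
    by eventually_elim auto
  then show ?thesis
    by (rule Lim_transform_eventually[OF lim])
qed

lemma AE_tendsto_zero_if_summable_nn_integral_min_one:
  fixes X :: "nat \<Rightarrow> 'a \<Rightarrow> real"
  assumes meas: "\<And>k. k \<ge> m \<Longrightarrow> X k \<in> borel_measurable M"
    and nonneg: "\<And>k x. k \<ge> m \<Longrightarrow> x \<in> space M \<Longrightarrow> 0 \<le> X k x"
    and bound: "\<And>k. k \<ge> m \<Longrightarrow> (\<integral>\<^sup>+x. ennreal (min 1 (X k x)) \<partial>M) \<le> ennreal (b k)"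
    and b: "summable b" "\<And>k. 0 \<le> b k"
  shows "AE x in M. (\<lambda>k. X k x) \<longlonglongrightarrow> 0"
proof -
  have "AE x in M. (\<lambda>k. min 1 (X (k + m) x)) \<longlonglongrightarrow> 0"
  proof (rule AE_tendsto_zero_if_summable_nn_integral[where b = "\<lambda>k. b (k + m)"])
    show "(\<lambda>x. min 1 (X (k + m) x)) \<in> borel_measurable M" for k
      using meas[of "k + m"] by measurable
    show "0 \<le> min 1 (X (k + m) x)" if "x \<in> space M" for k x
      using nonneg[of "k + m" x] that by simp
    show "(\<integral>\<^sup>+x. ennreal (min 1 (X (k + m) x)) \<partial>M) \<le> ennreal (b (k + m))" for k
      by (rule bound) simp
    show "summable (\<lambda>k. b (k + m))"
      using b(1) by (rule summable_ignore_initial_segment)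
    show "0 \<le> b (k + m)" for k
      by (rule b(2))
  qed
  then show ?thesis
    by eventually_elim (rule LIMSEQ_offset, rule tendsto_zero_if_min_one_tendsto_zero)
qed

theorem proposition5:
  fixes M :: "'a measure"
    and T :: "nat \<Rightarrow> 'a \<Rightarrow> real"
    and Y :: "nat \<Rightarrow> 'a \<Rightarrow> real"
    and \<beta> K\<^sub>0 c :: real
  assumes "prob_space M"
    and T0: "\<And>x. x \<in> space M \<Longrightarrow> T 0 x = 0"
    and T_meas: "\<And>i. T i \<in> borel_measurable M"
    and indep: "prob_space.indep_vars M (\<lambda>_. borel) (\<lambda>i x. T (Suc i) x - T i x) UNIV"
    and expo: "\<And>i. distributed M lborel (\<lambda>x. T (Suc i) x - T i x)
                     (\<lambda>t. ennreal (exponential_density 1 t))"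
    and \<beta>: "\<beta> > 0" and K0: "K\<^sub>0 > 0"
    and Y_meas: "\<And>k. k \<ge> 1 \<Longrightarrow> Y k \<in> borel_measurable M"
    and Y_nonneg: "\<And>k x. k \<ge> 1 \<Longrightarrow> x \<in> space M \<Longrightarrow> Y k x \<ge> 0"
    and bound: "\<And>k. k \<ge> 1 \<Longrightarrow>
                  (\<integral>\<^sup>+ x. ennreal (exp (\<beta> * T k x) * Y k x) \<partial>M) \<le> ennreal K\<^sub>0"
    and c: "0 < c" "c < 1"
  shows "AE x in M. (\<lambda>k. exp (\<beta> * c * real k) * Y k x) \<longlonglongrightarrow> 0"
proof -
  interpret prob_space M by fact
  define s where "s = (1 - c) / 2"
  define a where "a = 1 - s"
  define q where "q = exp (- \<beta> * (a - c))"
  define r where "r = exp (s * a) / (1 + s)"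
  have s: "0 < s" "s < 1" and "c < a"
    using c by (auto simp: s_def a_def field_simps)
  have "exp (s * a) < 1 + s"
    using exp_mult_one_minus_less[OF s] by (simp add: a_def)
  then have q: "0 < q" "q < 1" and r: "0 < r" "r < 1"
    using \<beta> s \<open>c < a\<close> by (simp_all add: q_def r_def)
  have "(\<integral>\<^sup>+x. ennreal (min 1 (exp (\<beta> * c * real k) * Y k x)) \<partial>M) \<le> ennreal (K\<^sub>0 * q ^ k + r ^ k)"
    if "k \<ge> 1" for k
    using nn_integral_min_one_le_split[OF T_meas Y_meas[OF that] Y_nonneg[OF that] _
        less_imp_le[OF \<open>c < a\<close>] _ _ _ bound[OF that]
        nn_integral_exp_neg_renewal[OF T0 indep expo, of s k, THEN eq_refl], of "real k"] \<beta> s K0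
    by (simp add: q_def r_def power_divide mult.commute flip: exp_of_nat_mult)
  moreover have "summable (\<lambda>k. K\<^sub>0 * q ^ k + r ^ k)"
    using q r by (intro summable_add summable_mult summable_geometric) auto
  ultimately show ?thesis
    using Y_meas Y_nonneg K0 q r
    by (intro AE_tendsto_zero_if_summable_nn_integral_min_one[where m = 1]) auto
qed

end
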